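(* Let $\mathcal{V}$ be a locally small symmetric monoidal closed category. Then $\mathrm{StrMono}_{\mathcal{V}}\underline{\mathcal{V}}=\mathrm{StrMono}\,\mathcal{V}$.
   Context: $\underline{\mathcal{V}}$ is the self-enrichment of $\mathcal{V}$. For a $\mathcal{V}$-category $\mathbf{A}$: $\mathcal{V}$-monos are morphisms $m$ with every $\mathbf{A}(A,m)$ mono in $\mathcal{V}$, $\mathcal{V}$-epis are $\mathcal{V}$-monos in $\mathbf{A}^{\mathrm{op}}$; $e\downarrow_{\mathcal{V}}m$ for $e:A_1\to A_2$, $m:B_1\to B_2$ means the square formed by $\mathbf{A}(A_2,m)$, $\mathbf{A}(e,B_1)$, $\mathbf{A}(e,B_2)$, $\mathbf{A}(A_1,m)$ is a pullback in $\mathcal{V}$; $\mathcal{E}^{\downarrow_{\mathcal{V}}}$ is the class of $m$ with $e\downarrow_{\mathcal{V}}m$ for all $e\in\mathcal{E}$. $\mathrm{StrMono}_{\mathcal{V}}\mathbf{A}:=(\mathrm{Epi}_{\mathcal{V}}\mathbf{A})^{\downarrow_{\mathcal{V}}}\cap\mathrm{Mono}_{\mathcal{V}}\mathbf{A}$. The ordinary class $\mathrm{StrMono}\,\mathcal{V}=(\mathrm{Epi}\,\mathcal{V})^{\downarrow}\cap\mathrm{Mono}\,\mathcal{V}$ consists of the strong monomorphisms of $\mathcal{V}$ (monos with the unique diagonal fill-in property against all epis). *)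

theory Defs
  imports Main
begin

text \<open>A (locally small) category is represented with a type of objects and a
type of morphisms; every element of these types is an object/morphism.
Composition is total on the type but only meaningful on composable pairs.\<close>

record ('o, 'm) smc_data =
  sdom   :: "'m \<Rightarrow> 'o"
  scod   :: "'m \<Rightarrow> 'o"
  scomp  :: "'m \<Rightarrow> 'm \<Rightarrow> 'm"          \<comment> \<open>scomp g f = g o f\<close>
  sid    :: "'o \<Rightarrow> 'm"
  tobj   :: "'o \<Rightarrow> 'o \<Rightarrow> 'o"
  tarr   :: "'m \<Rightarrow> 'm \<Rightarrow> 'm"
  tunit  :: "'o"
  assoc  :: "'o \<Rightarrow> 'o \<Rightarrow> 'o \<Rightarrow> 'm"
  lunit  :: "'o \<Rightarrow> 'm"
  runit  :: "'o \<Rightarrow> 'm"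
  symm   :: "'o \<Rightarrow> 'o \<Rightarrow> 'm"
  ihom   :: "'o \<Rightarrow> 'o \<Rightarrow> 'o"
  ev     :: "'o \<Rightarrow> 'o \<Rightarrow> 'm"

definition hom_in :: "('o,'m,'x) smc_data_scheme \<Rightarrow> 'm \<Rightarrow> 'o \<Rightarrow> 'o \<Rightarrow> bool" where
  "hom_in V f A B \<longleftrightarrow> sdom V f = A \<and> scod V f = B"

definition is_category :: "('o,'m,'x) smc_data_scheme \<Rightarrow> bool" where
  "is_category V \<longleftrightarrow>
     (\<forall>A. hom_in V (sid V A) A A) \<and>
     (\<forall>f g. scod V f = sdom V g \<longrightarrow> hom_in V (scomp V g f) (sdom V f) (scod V g)) \<and>
     (\<forall>f. scomp V (sid V (scod V f)) f = f \<and> scomp V f (sid V (sdom V f)) = f) \<and>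
     (\<forall>f g h. scod V f = sdom V g \<and> scod V g = sdom V h \<longrightarrow>
         scomp V h (scomp V g f) = scomp V (scomp V h g) f)"

definition is_iso :: "('o,'m,'x) smc_data_scheme \<Rightarrow> 'm \<Rightarrow> bool" where
  "is_iso V f \<longleftrightarrow> (\<exists>g. hom_in V g (scod V f) (sdom V f) \<and>
       scomp V g f = sid V (sdom V f) \<and> scomp V f g = sid V (scod V f))"

definition is_monoidal :: "('o,'m,'x) smc_data_scheme \<Rightarrow> bool" where
  "is_monoidal V \<longleftrightarrow>
     \<comment> \<open>tensor is a bifunctor\<close>
     (\<forall>f g. hom_in V (tarr V f g) (tobj V (sdom V f) (sdom V g)) (tobj V (scod V f) (scod V g))) \<and>
     (\<forall>A B. tarr V (sid V A) (sid V B) = sid V (tobj V A B)) \<and>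
     (\<forall>f g f' g'. scod V f = sdom V g \<and> scod V f' = sdom V g' \<longrightarrow>
        tarr V (scomp V g f) (scomp V g' f') = scomp V (tarr V g g') (tarr V f f')) \<and>
     \<comment> \<open>associator: typed, invertible, natural\<close>
     (\<forall>A B C. hom_in V (assoc V A B C) (tobj V (tobj V A B) C) (tobj V A (tobj V B C))
              \<and> is_iso V (assoc V A B C)) \<and>
     (\<forall>f g h. scomp V (assoc V (scod V f) (scod V g) (scod V h)) (tarr V (tarr V f g) h)
            = scomp V (tarr V f (tarr V g h)) (assoc V (sdom V f) (sdom V g) (sdom V h))) \<and>
     \<comment> \<open>unitors: typed, invertible, natural\<close>
     (\<forall>A. hom_in V (lunit V A) (tobj V (tunit V) A) A \<and> is_iso V (lunit V A)) \<and>
     (\<forall>A. hom_in V (runit V A) (tobj V A (tunit V)) A \<and> is_iso V (runit V A)) \<and>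
     (\<forall>f. scomp V (lunit V (scod V f)) (tarr V (sid V (tunit V)) f) = scomp V f (lunit V (sdom V f))) \<and>
     (\<forall>f. scomp V (runit V (scod V f)) (tarr V f (sid V (tunit V))) = scomp V f (runit V (sdom V f))) \<and>
     \<comment> \<open>pentagon\<close>
     (\<forall>A B C D.
        scomp V (assoc V A B (tobj V C D)) (assoc V (tobj V A B) C D)
      = scomp V (tarr V (sid V A) (assoc V B C D))
          (scomp V (assoc V A (tobj V B C) D) (tarr V (assoc V A B C) (sid V D)))) \<and>
     \<comment> \<open>triangle\<close>
     (\<forall>A B. scomp V (tarr V (sid V A) (lunit V B)) (assoc V A (tunit V) B)
            = tarr V (runit V A) (sid V B))"

definition is_symmetric :: "('o,'m,'x) smc_data_scheme \<Rightarrow> bool" where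
  "is_symmetric V \<longleftrightarrow>
     (\<forall>A B. hom_in V (symm V A B) (tobj V A B) (tobj V B A)) \<and>
     (\<forall>f g. scomp V (symm V (scod V f) (scod V g)) (tarr V f g)
          = scomp V (tarr V g f) (symm V (sdom V f) (sdom V g))) \<and>
     (\<forall>A B. scomp V (symm V B A) (symm V A B) = sid V (tobj V A B)) \<and>
     \<comment> \<open>hexagon\<close>
     (\<forall>A B C.
        scomp V (assoc V B C A) (scomp V (symm V A (tobj V B C)) (assoc V A B C))
      = scomp V (tarr V (sid V B) (symm V A C))
          (scomp V (assoc V B A C) (tarr V (symm V A B) (sid V C))))"

text \<open>Closedness: each functor \<open>- \<otimes> B\<close> has right adjoint \<open>[B,-]\<close> with counit \<open>ev\<close>.\<close>
definition is_closed :: "('o,'m,'x) smc_data_scheme \<Rightarrow> bool" where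
  "is_closed V \<longleftrightarrow>
     (\<forall>B C. hom_in V (ev V B C) (tobj V (ihom V B C) B) C) \<and>
     (\<forall>A B C f. hom_in V f (tobj V A B) C \<longrightarrow>
        (\<exists>!g. hom_in V g A (ihom V B C) \<and> scomp V (ev V B C) (tarr V g (sid V B)) = f))"

definition symmetric_monoidal_closed :: "('o,'m,'x) smc_data_scheme \<Rightarrow> bool" where
  "symmetric_monoidal_closed V \<longleftrightarrow>
     is_category V \<and> is_monoidal V \<and> is_symmetric V \<and> is_closed V"

text \<open>Currying (transpose under the adjunction) and the internal-hom bifunctor
on morphisms: for \<open>h : A' \<rightarrow> A\<close>, \<open>k : B \<rightarrow> B'\<close>, \<open>[h,k] : [A,B] \<rightarrow> [A',B']\<close>.
This is the action \<open>\<underline>V\<close>(h,k) of the self-enrichment.\<close>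
definition curry_arr :: "('o,'m,'x) smc_data_scheme \<Rightarrow> 'o \<Rightarrow> 'o \<Rightarrow> 'o \<Rightarrow> 'm \<Rightarrow> 'm" where
  "curry_arr V A B C f =
     (THE g. hom_in V g A (ihom V B C) \<and> scomp V (ev V B C) (tarr V g (sid V B)) = f)"

definition ihom_arr :: "('o,'m,'x) smc_data_scheme \<Rightarrow> 'm \<Rightarrow> 'm \<Rightarrow> 'm" where
  "ihom_arr V h k =
     curry_arr V (ihom V (scod V h) (sdom V k)) (sdom V h) (scod V k)
       (scomp V k (scomp V (ev V (scod V h) (sdom V k))
                            (tarr V (sid V (ihom V (scod V h) (sdom V k))) h)))"

definition is_mono :: "('o,'m,'x) smc_data_scheme \<Rightarrow> 'm \<Rightarrow> bool" where
  "is_mono V m \<longleftrightarrow> (\<forall>g h. scod V g = sdom V m \<and> scod V h = sdom V m \<and> sdom V g = sdom V h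
       \<and> scomp V m g = scomp V m h \<longrightarrow> g = h)"

definition is_epi :: "('o,'m,'x) smc_data_scheme \<Rightarrow> 'm \<Rightarrow> bool" where
  "is_epi V e \<longleftrightarrow> (\<forall>g h. sdom V g = scod V e \<and> sdom V h = scod V e \<and> scod V g = scod V h
       \<and> scomp V g e = scomp V h e \<longrightarrow> g = h)"

definition orth :: "('o,'m,'x) smc_data_scheme \<Rightarrow> 'm \<Rightarrow> 'm \<Rightarrow> bool" where
  "orth V e m \<longleftrightarrow> (\<forall>u v. hom_in V u (sdom V e) (sdom V m) \<and> hom_in V v (scod V e) (scod V m)
        \<and> scomp V m u = scomp V v e \<longrightarrow>
        (\<exists>!d. hom_in V d (scod V e) (sdom V m) \<and> scomp V d e = u \<and> scomp V m d = v))"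

definition StrMono :: "('o,'m,'x) smc_data_scheme \<Rightarrow> 'm set" where
  "StrMono V = {m. is_mono V m \<and> (\<forall>e. is_epi V e \<longrightarrow> orth V e m)}"

definition is_pullback :: "('o,'m,'x) smc_data_scheme \<Rightarrow> 'm \<Rightarrow> 'm \<Rightarrow> 'm \<Rightarrow> 'm \<Rightarrow> bool" where
  "is_pullback V p1 p2 f g \<longleftrightarrow>
     sdom V p1 = sdom V p2 \<and> scod V p1 = sdom V f \<and> scod V p2 = sdom V g \<and> scod V f = scod V g \<and>
     scomp V f p1 = scomp V g p2 \<and>
     (\<forall>q1 q2. sdom V q1 = sdom V q2 \<and> scod V q1 = sdom V f \<and> scod V q2 = sdom V g \<and>
        scomp V f q1 = scomp V g q2 \<longrightarrow>
        (\<exists>!u. hom_in V u (sdom V q1) (sdom V p1) \<and> scomp V p1 u = q1 \<and> scomp V p2 u = q2))"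

definition V_mono :: "('o,'m,'x) smc_data_scheme \<Rightarrow> 'm \<Rightarrow> bool" where
  "V_mono V m \<longleftrightarrow> (\<forall>A. is_mono V (ihom_arr V (sid V A) m))"

text \<open>\<open>\<V>\<close>-epis of \<open>\<underline>V\<close> are \<open>\<V>\<close>-monos of the opposite: all \<open>[e,B]\<close> are mono.\<close>
definition V_epi :: "('o,'m,'x) smc_data_scheme \<Rightarrow> 'm \<Rightarrow> bool" where
  "V_epi V e \<longleftrightarrow> (\<forall>B. is_mono V (ihom_arr V e (sid V B)))"

definition V_orth :: "('o,'m,'x) smc_data_scheme \<Rightarrow> 'm \<Rightarrow> 'm \<Rightarrow> bool" where
  "V_orth V e m \<longleftrightarrow>
     is_pullback V (ihom_arr V (sid V (scod V e)) m) (ihom_arr V e (sid V (sdom V m)))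
                   (ihom_arr V e (sid V (scod V m))) (ihom_arr V (sid V (sdom V e)) m)"

definition StrMono_V :: "('o,'m,'x) smc_data_scheme \<Rightarrow> 'm set" where
  "StrMono_V V = {m. V_mono V m \<and> (\<forall>e. V_epi V e \<longrightarrow> V_orth V e m)}"

end

theory Submission
  imports Defs
begin

text \<open>Maps \<open>X \<rightarrow> [A, B]\<close> correspond bijectively to maps \<open>X \<otimes> A \<rightarrow> B\<close>, naturally in all
variables. Under this transposition \<open>[A, m] \<circ> -\<close> becomes \<open>m \<circ> -\<close>, \<open>[e, B] \<circ> -\<close> becomes
\<open>- \<circ> (X \<otimes> e)\<close>, and a cone from \<open>X\<close> over the square defining \<open>e \<down>\<^sub>V m\<close> becomes a lifting
problem of \<open>X \<otimes> e\<close> against \<open>m\<close>. Hence \<open>m\<close> is a \<open>V\<close>-mono iff it is mono (take \<open>A = I\<close>),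
\<open>e\<close> is a \<open>V\<close>-epi iff every \<open>X \<otimes> e\<close> is epi iff \<open>e\<close> is epi (take \<open>X = I\<close>; conversely
\<open>- \<otimes> X\<close> is a left adjoint and the symmetry moves \<open>X\<close> to the other side), and \<open>e \<down>\<^sub>V m\<close> iff
\<open>X \<otimes> e \<down> m\<close> for all \<open>X\<close>. As \<open>I \<otimes> e \<cong> e\<close> and tensoring preserves epis, orthogonality
to all epis means the same in both senses.\<close>

lemma bij_betw_Ex1_iff:
  assumes "bij_betw f A B" and "\<And>x. x \<in> A \<Longrightarrow> P x \<longleftrightarrow> Q (f x)"
  shows "(\<exists>!x. x \<in> A \<and> P x) \<longleftrightarrow> (\<exists>!y. y \<in> B \<and> Q y)"
  using assms unfolding bij_betw_def inj_on_def by (smt (verit, best) imageE imageI)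

lemma bij_betw_Ball_iff:
  assumes "bij_betw f A B" and "\<And>x. x \<in> A \<Longrightarrow> P x \<longleftrightarrow> Q (f x)"
  shows "(\<forall>x\<in>A. P x) \<longleftrightarrow> (\<forall>y\<in>B. Q y)"
  using assms unfolding bij_betw_def by auto

locale smc =
  fixes V :: "('o,'m) smc_data"
  assumes smc: "symmetric_monoidal_closed V"
begin

abbreviation comp :: "'m \<Rightarrow> 'm \<Rightarrow> 'm"  (infixr \<open>\<cdot>\<close> 55)
  where "g \<cdot> f \<equiv> scomp V g f"

abbreviation tensor :: "'m \<Rightarrow> 'm \<Rightarrow> 'm"  (infixr \<open>\<otimes>\<close> 70)
  where "f \<otimes> g \<equiv> tarr V f g"

abbreviation hom :: "'o \<Rightarrow> 'o \<Rightarrow> 'm set"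
  where "hom A B \<equiv> {f. hom_in V f A B}"

abbreviation ihom_post :: "'o \<Rightarrow> 'm \<Rightarrow> 'm"
  where "ihom_post A m \<equiv> ihom_arr V (sid V A) m"

abbreviation ihom_pre :: "'m \<Rightarrow> 'o \<Rightarrow> 'm"
  where "ihom_pre e B \<equiv> ihom_arr V e (sid V B)"

declare hom_in_def [simp]

lemma category: "is_category V"
  and monoidal: "is_monoidal V"
  and symmetric: "is_symmetric V"
  and closed: "is_closed V"
  using smc unfolding symmetric_monoidal_closed_def by simp_all

lemma dom_id [simp]: "sdom V (sid V A) = A"
  and cod_id [simp]: "scod V (sid V A) = A"
  using category unfolding is_category_def by simp_all

lemma dom_comp [simp]: "scod V f = sdom V g \<Longrightarrow> sdom V (g \<cdot> f) = sdom V f"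
  and cod_comp [simp]: "scod V f = sdom V g \<Longrightarrow> scod V (g \<cdot> f) = scod V g"
  using category unfolding is_category_def by simp_all

lemma comp_id_left [simp]: "scod V f = A \<Longrightarrow> sid V A \<cdot> f = f"
  and comp_id_right [simp]: "sdom V f = A \<Longrightarrow> f \<cdot> sid V A = f"
  using category unfolding is_category_def by blast+

lemma comp_assoc [simp]:
  "scod V f = sdom V g \<Longrightarrow> scod V g = sdom V h \<Longrightarrow> (h \<cdot> g) \<cdot> f = h \<cdot> g \<cdot> f"
  using category unfolding is_category_def by simp

text \<open>The simplifier associates composites to the right; this form of an equation between binary
composites still applies inside longer ones.\<close>

lemma comp_reassoc:
  "g \<cdot> f = k \<Longrightarrow> scod V h = sdom V f \<Longrightarrow> scod V f = sdom V g \<Longrightarrow> g \<cdot> f \<cdot> h = k \<cdot> h"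
  by (simp flip: comp_assoc)

lemma dom_tensor [simp]: "sdom V (f \<otimes> g) = tobj V (sdom V f) (sdom V g)"
  and cod_tensor [simp]: "scod V (f \<otimes> g) = tobj V (scod V f) (scod V g)"
  and tensor_id [simp]: "sid V A \<otimes> sid V B = sid V (tobj V A B)"
  using monoidal unfolding is_monoidal_def by simp_all

lemma tensor_comp:
  "scod V f = sdom V g \<Longrightarrow> scod V f' = sdom V g' \<Longrightarrow> (g \<cdot> f) \<otimes> (g' \<cdot> f') = (g \<otimes> g') \<cdot> (f \<otimes> f')"
  using monoidal unfolding is_monoidal_def by simp

lemma dom_lunit [simp]: "sdom V (lunit V A) = tobj V (tunit V) A"
  and cod_lunit [simp]: "scod V (lunit V A) = A"
  and is_iso_lunit: "is_iso V (lunit V A)"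
  and dom_runit [simp]: "sdom V (runit V A) = tobj V A (tunit V)"
  and cod_runit [simp]: "scod V (runit V A) = A"
  and is_iso_runit: "is_iso V (runit V A)"
  using monoidal unfolding is_monoidal_def by simp_all

lemma lunit_natural:
  "lunit V (scod V f) \<cdot> (sid V (tunit V) \<otimes> f) = f \<cdot> lunit V (sdom V f)"
  using monoidal unfolding is_monoidal_def by simp

lemma dom_symm [simp]: "sdom V (symm V A B) = tobj V A B"
  and cod_symm [simp]: "scod V (symm V A B) = tobj V B A"
  and symm_natural:
    "symm V (scod V f) (scod V g) \<cdot> (f \<otimes> g) = (g \<otimes> f) \<cdot> symm V (sdom V f) (sdom V g)"
  and symm_symm: "symm V B A \<cdot> symm V A B = sid V (tobj V A B)"
  using symmetric unfolding is_symmetric_def by simp_all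

lemma dom_ev [simp]: "sdom V (ev V B C) = tobj V (ihom V B C) B"
  and cod_ev [simp]: "scod V (ev V B C) = C"
  using closed unfolding is_closed_def by simp_all

lemma ex1_curry:
  "hom_in V f (tobj V A B) C \<Longrightarrow> \<exists>!g. hom_in V g A (ihom V B C) \<and> ev V B C \<cdot> (g \<otimes> sid V B) = f"
  using closed unfolding is_closed_def by blast

lemma is_epiD:
  "is_epi V e \<Longrightarrow> sdom V g = scod V e \<Longrightarrow> sdom V h = scod V e \<Longrightarrow> scod V g = scod V h \<Longrightarrow>
    g \<cdot> e = h \<cdot> e \<Longrightarrow> g = h"
  unfolding is_epi_def by blast

lemma is_monoD:
  "is_mono V m \<Longrightarrow> scod V g = sdom V m \<Longrightarrow> scod V h = sdom V m \<Longrightarrow> sdom V g = sdom V h \<Longrightarrow>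
    m \<cdot> g = m \<cdot> h \<Longrightarrow> g = h"
  unfolding is_mono_def by blast

lemma is_epi_if_is_iso:
  assumes "is_iso V r"
  shows "is_epi V r"
  unfolding is_epi_def
proof (intro allI impI, elim conjE)
  fix g h
  assume g: "sdom V g = scod V r" and h: "sdom V h = scod V r" and "g \<cdot> r = h \<cdot> r"
  obtain r' where r': "hom_in V r' (scod V r) (sdom V r)" "r \<cdot> r' = sid V (scod V r)"
    using assms unfolding is_iso_def by blast
  from \<open>g \<cdot> r = h \<cdot> r\<close> have "(g \<cdot> r) \<cdot> r' = (h \<cdot> r) \<cdot> r'" by simp
  with r' g h show "g = h" by simp
qed

lemma is_epi_comp:
  assumes f: "is_epi V f" and g: "is_epi V g" and fg: "scod V f = sdom V g"
  shows "is_epi V (g \<cdot> f)"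
  unfolding is_epi_def
proof (intro allI impI, elim conjE)
  fix h k
  assume "sdom V h = scod V (g \<cdot> f)" "sdom V k = scod V (g \<cdot> f)"
    and hk: "scod V h = scod V k" and eq: "h \<cdot> g \<cdot> f = k \<cdot> g \<cdot> f"
  then have h: "sdom V h = scod V g" and k: "sdom V k = scod V g" using fg by simp_all
  from fg h k eq have "(h \<cdot> g) \<cdot> f = (k \<cdot> g) \<cdot> f" by simp
  then have "h \<cdot> g = k \<cdot> g" by (rule is_epiD[OF f, rotated -1]) (simp_all add: fg h k hk)
  from is_epiD[OF g h k hk this] show "h = k" .
qed

definition uncurry_arr :: "'o \<Rightarrow> 'o \<Rightarrow> 'm \<Rightarrow> 'm"
  where "uncurry_arr A B g = ev V A B \<cdot> (g \<otimes> sid V A)"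

lemma uncurry_arr_in_hom: "g \<in> hom X (ihom V A B) \<Longrightarrow> uncurry_arr A B g \<in> hom (tobj V X A) B"
  unfolding uncurry_arr_def by simp

lemma uncurry_arr_id [simp]: "uncurry_arr A B (sid V (ihom V A B)) = ev V A B"
  unfolding uncurry_arr_def by simp

lemma
  assumes "f \<in> hom (tobj V X A) B"
  shows curry_arr_in_hom: "curry_arr V X A B f \<in> hom X (ihom V A B)"
    and uncurry_curry_arr: "uncurry_arr A B (curry_arr V X A B f) = f"
  using theI'[OF ex1_curry[of f X A B]] assms
  unfolding curry_arr_def uncurry_arr_def mem_Collect_eq by simp_all

lemma ex_uncurry_arr_eq: "f \<in> hom (tobj V X A) B \<Longrightarrow> \<exists>g\<in>hom X (ihom V A B). uncurry_arr A B g = f"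
  using curry_arr_in_hom uncurry_curry_arr by blast

lemma bij_betw_uncurry_arr:
  "bij_betw (uncurry_arr A B) (hom X (ihom V A B)) (hom (tobj V X A) B)"
proof (rule bij_betw_imageI)
  show "inj_on (uncurry_arr A B) (hom X (ihom V A B))"
  proof (rule inj_onI)
    fix f g
    assume f: "f \<in> hom X (ihom V A B)" and g: "g \<in> hom X (ihom V A B)"
      and "uncurry_arr A B f = uncurry_arr A B g"
    then show "f = g"
      using ex1_curry[of "uncurry_arr A B f" X A B] unfolding uncurry_arr_def by simp blast
  qed
  show "uncurry_arr A B ` hom X (ihom V A B) = hom (tobj V X A) B"
  proof (intro equalityI subsetI)
    fix f
    assume f: "f \<in> hom (tobj V X A) B"
    show "f \<in> uncurry_arr A B ` hom X (ihom V A B)"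
      using curry_arr_in_hom[OF f] uncurry_curry_arr[OF f, symmetric] by (rule rev_image_eqI)
  qed (use uncurry_arr_in_hom in blast)
qed

lemma uncurry_arr_eq_iff:
  "f \<in> hom X (ihom V A B) \<Longrightarrow> g \<in> hom X (ihom V A B) \<Longrightarrow>
    uncurry_arr A B f = uncurry_arr A B g \<longleftrightarrow> f = g"
  using bij_betw_uncurry_arr[of A B X] unfolding bij_betw_def inj_on_def by blast

lemma tensor_interchange:
  "(sid V (scod V f) \<otimes> g) \<cdot> (f \<otimes> sid V (sdom V g)) = (f \<otimes> sid V (scod V g)) \<cdot> (sid V (sdom V f) \<otimes> g)"
  using tensor_comp[of f "sid V (scod V f)" "sid V (sdom V g)" g]
    tensor_comp[of "sid V (sdom V f)" f g "sid V (scod V g)"]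
  by simp

lemma uncurry_arr_comp:
  "scod V a = sdom V g \<Longrightarrow> scod V g = ihom V A B \<Longrightarrow>
    uncurry_arr A B (g \<cdot> a) = uncurry_arr A B g \<cdot> (a \<otimes> sid V A)"
  unfolding uncurry_arr_def using tensor_comp[of a g "sid V A" "sid V A"] by simp

lemma
  shows dom_ihom_arr [simp]: "sdom V (ihom_arr V h k) = ihom V (scod V h) (sdom V k)"
    and cod_ihom_arr [simp]: "scod V (ihom_arr V h k) = ihom V (sdom V h) (scod V k)"
    and uncurry_arr_ihom_arr: "uncurry_arr (sdom V h) (scod V k) (ihom_arr V h k) =
      k \<cdot> ev V (scod V h) (sdom V k) \<cdot> (sid V (ihom V (scod V h) (sdom V k)) \<otimes> h)"
  using curry_arr_in_hom[of "k \<cdot> ev V (scod V h) (sdom V k) \<cdot> (sid V (ihom V (scod V h) (sdom V k)) \<otimes> h)"]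
    uncurry_curry_arr[of "k \<cdot> ev V (scod V h) (sdom V k) \<cdot> (sid V (ihom V (scod V h) (sdom V k)) \<otimes> h)"]
  unfolding ihom_arr_def by simp_all

lemma uncurry_arr_ihom_arr_comp:
  assumes g: "scod V g = ihom V (scod V h) (sdom V k)"
  shows "uncurry_arr (sdom V h) (scod V k) (ihom_arr V h k \<cdot> g) =
    k \<cdot> uncurry_arr (scod V h) (sdom V k) g \<cdot> (sid V (sdom V g) \<otimes> h)"
proof -
  have "uncurry_arr (sdom V h) (scod V k) (ihom_arr V h k \<cdot> g) =
      (k \<cdot> ev V (scod V h) (sdom V k) \<cdot> (sid V (scod V g) \<otimes> h)) \<cdot> (g \<otimes> sid V (sdom V h))"
    using g by (simp add: uncurry_arr_comp uncurry_arr_ihom_arr)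
  also have "\<dots> = k \<cdot> ev V (scod V h) (sdom V k) \<cdot> (g \<otimes> sid V (scod V h)) \<cdot> (sid V (sdom V g) \<otimes> h)"
    using g tensor_interchange[of g h] by simp
  finally show ?thesis
    using g unfolding uncurry_arr_def by simp
qed

lemma uncurry_arr_ihom_post_comp:
  "scod V g = ihom V A (sdom V m) \<Longrightarrow>
    uncurry_arr A (scod V m) (ihom_post A m \<cdot> g) = m \<cdot> uncurry_arr A (sdom V m) g"
  using uncurry_arr_ihom_arr_comp[of g "sid V A" m] by (simp add: uncurry_arr_def)

lemma uncurry_arr_ihom_pre_comp:
  "scod V g = ihom V (scod V e) B \<Longrightarrow>
    uncurry_arr (sdom V e) B (ihom_pre e B \<cdot> g) =
      uncurry_arr (scod V e) B g \<cdot> (sid V (sdom V g) \<otimes> e)"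
  using uncurry_arr_ihom_arr_comp[of g e "sid V B"] by (simp add: uncurry_arr_def)

lemma is_mono_ihom_post:
  assumes m: "is_mono V m"
  shows "is_mono V (ihom_post A m)"
  unfolding is_mono_def
proof (intro allI impI, elim conjE)
  fix g h
  assume "scod V g = sdom V (ihom_post A m)" "scod V h = sdom V (ihom_post A m)"
    and gh: "sdom V g = sdom V h" and eq: "ihom_post A m \<cdot> g = ihom_post A m \<cdot> h"
  then have g: "scod V g = ihom V A (sdom V m)" and h: "scod V h = ihom V A (sdom V m)" by simp_all
  from arg_cong[OF eq, of "uncurry_arr A (scod V m)"]
  have "m \<cdot> uncurry_arr A (sdom V m) g = m \<cdot> uncurry_arr A (sdom V m) h"
    by (simp add: uncurry_arr_ihom_post_comp g h)
  then have "uncurry_arr A (sdom V m) g = uncurry_arr A (sdom V m) h"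
    by (rule is_monoD[OF m, rotated -1]) (simp_all add: uncurry_arr_def g h gh)
  with g h gh show "g = h" by (simp add: uncurry_arr_eq_iff)
qed

lemma is_mono_if_is_mono_ihom_post_unit:
  assumes mono: "is_mono V (ihom_post (tunit V) m)"
  shows "is_mono V m"
  unfolding is_mono_def
proof (intro allI impI, elim conjE)
  fix f g
  assume f: "scod V f = sdom V m" and g: "scod V g = sdom V m" and fg: "sdom V f = sdom V g"
    and eq: "m \<cdot> f = m \<cdot> g"
  let ?Y = "sdom V f" and ?U = "uncurry_arr (tunit V) (sdom V m)"
  obtain cf cg where cf: "cf \<in> hom ?Y (ihom V (tunit V) (sdom V m))" "?U cf = f \<cdot> runit V ?Y"
    and cg: "cg \<in> hom ?Y (ihom V (tunit V) (sdom V m))" "?U cg = g \<cdot> runit V ?Y"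
    using ex_uncurry_arr_eq[of "f \<cdot> runit V ?Y" ?Y "tunit V" "sdom V m"]
      ex_uncurry_arr_eq[of "g \<cdot> runit V ?Y" ?Y "tunit V" "sdom V m"] f g fg by auto
  have "uncurry_arr (tunit V) (scod V m) (ihom_post (tunit V) m \<cdot> cf) =
      uncurry_arr (tunit V) (scod V m) (ihom_post (tunit V) m \<cdot> cg)"
    using cf cg f g fg eq by (simp add: uncurry_arr_ihom_post_comp flip: comp_assoc)
  then have "ihom_post (tunit V) m \<cdot> cf = ihom_post (tunit V) m \<cdot> cg"
    using cf cg by (subst (asm) uncurry_arr_eq_iff) simp_all
  then have "cf = cg" by (rule is_monoD[OF mono, rotated -1]) (use cf cg in simp_all)
  with cf cg have "f \<cdot> runit V ?Y = g \<cdot> runit V ?Y" by simp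
  then show "f = g"
    by (rule is_epiD[OF is_epi_if_is_iso[OF is_iso_runit], rotated -1]) (use f g fg in simp_all)
qed

lemma V_mono_iff_is_mono: "V_mono V m \<longleftrightarrow> is_mono V m"
  unfolding V_mono_def using is_mono_ihom_post is_mono_if_is_mono_ihom_post_unit by blast

lemma is_epi_tensor_id_right:
  assumes e: "is_epi V e"
  shows "is_epi V (e \<otimes> sid V X)"
  unfolding is_epi_def
proof (intro allI impI, elim conjE)
  fix g h
  assume "sdom V g = scod V (e \<otimes> sid V X)" "sdom V h = scod V (e \<otimes> sid V X)"
    and gh: "scod V g = scod V h" and eq: "g \<cdot> (e \<otimes> sid V X) = h \<cdot> (e \<otimes> sid V X)"
  then obtain cg ch where cg: "cg \<in> hom (scod V e) (ihom V X (scod V g))" "uncurry_arr X (scod V g) cg = g"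
    and ch: "ch \<in> hom (scod V e) (ihom V X (scod V g))" "uncurry_arr X (scod V g) ch = h"
    using ex_uncurry_arr_eq[of g "scod V e" X "scod V g"] ex_uncurry_arr_eq[of h "scod V e" X "scod V g"] by auto
  have "uncurry_arr X (scod V g) (cg \<cdot> e) = uncurry_arr X (scod V g) (ch \<cdot> e)"
    using cg ch eq by (simp add: uncurry_arr_comp)
  then have "cg \<cdot> e = ch \<cdot> e"
    using cg ch by (subst (asm) uncurry_arr_eq_iff) simp_all
  then have "cg = ch" by (rule is_epiD[OF e, rotated -1]) (use cg ch in simp_all)
  then show "g = h" using cg(2) ch(2) by simp
qed

lemma is_iso_symm: "is_iso V (symm V A B)"
  unfolding is_iso_def using symm_symm[of A B] symm_symm[of B A]
  by (intro exI[of _ "symm V B A"]) simp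

lemma is_epi_tensor_id_left:
  assumes e: "is_epi V e"
  shows "is_epi V (sid V X \<otimes> e)"
proof -
  have "sid V X \<otimes> e = ((sid V X \<otimes> e) \<cdot> symm V (sdom V e) X) \<cdot> symm V X (sdom V e)"
    by (simp add: symm_symm)
  also have "\<dots> = (symm V (scod V e) X \<cdot> (e \<otimes> sid V X)) \<cdot> symm V X (sdom V e)"
    using symm_natural[of e "sid V X"] by simp
  finally show ?thesis
    using is_epi_if_is_iso[OF is_iso_symm] is_epi_tensor_id_right[OF e] by (simp add: is_epi_comp)
qed

lemma V_epi_if_is_epi:
  assumes e: "is_epi V e"
  shows "V_epi V e"
  unfolding V_epi_def is_mono_def
proof (intro allI impI, elim conjE)
  fix B g h
  assume "scod V g = sdom V (ihom_pre e B)" "scod V h = sdom V (ihom_pre e B)"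
    and gh: "sdom V g = sdom V h" and eq: "ihom_pre e B \<cdot> g = ihom_pre e B \<cdot> h"
  then have g: "scod V g = ihom V (scod V e) B" and h: "scod V h = ihom V (scod V e) B" by simp_all
  from arg_cong[OF eq, of "uncurry_arr (sdom V e) B"]
  have "uncurry_arr (scod V e) B g \<cdot> (sid V (sdom V g) \<otimes> e) =
      uncurry_arr (scod V e) B h \<cdot> (sid V (sdom V g) \<otimes> e)"
    by (simp add: uncurry_arr_ihom_pre_comp g h gh)
  then have "uncurry_arr (scod V e) B g = uncurry_arr (scod V e) B h"
    by (rule is_epiD[OF is_epi_tensor_id_left[OF e], rotated -1]) (simp_all add: uncurry_arr_def g h gh)
  with g h gh show "g = h" by (simp add: uncurry_arr_eq_iff)
qed

lemma is_epi_if_V_epi: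
  assumes V_epi: "V_epi V e"
  shows "is_epi V e"
  unfolding is_epi_def
proof (intro allI impI, elim conjE)
  fix g h
  assume g: "sdom V g = scod V e" and h: "sdom V h = scod V e" and gh: "scod V g = scod V h"
    and eq: "g \<cdot> e = h \<cdot> e"
  let ?B = "scod V g" and ?U = "uncurry_arr (scod V e) (scod V g)"
  obtain cg ch where cg: "cg \<in> hom (tunit V) (ihom V (scod V e) ?B)" "?U cg = g \<cdot> lunit V (scod V e)"
    and ch: "ch \<in> hom (tunit V) (ihom V (scod V e) ?B)" "?U ch = h \<cdot> lunit V (scod V e)"
    using ex_uncurry_arr_eq[of "g \<cdot> lunit V (scod V e)" "tunit V" "scod V e" ?B]
      ex_uncurry_arr_eq[of "h \<cdot> lunit V (scod V e)" "tunit V" "scod V e" ?B]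
      g h gh by auto
  have transposed: "uncurry_arr (sdom V e) ?B (ihom_pre e ?B \<cdot> c) = (k \<cdot> e) \<cdot> lunit V (sdom V e)"
    if "c \<in> hom (tunit V) (ihom V (scod V e) ?B)" "?U c = k \<cdot> lunit V (scod V e)"
      and "sdom V k = scod V e" for c k
  proof -
    have "uncurry_arr (sdom V e) ?B (ihom_pre e ?B \<cdot> c) = k \<cdot> lunit V (scod V e) \<cdot> (sid V (tunit V) \<otimes> e)"
      using that by (simp add: uncurry_arr_ihom_pre_comp)
    also have "\<dots> = k \<cdot> e \<cdot> lunit V (sdom V e)"
      using lunit_natural[of e] by simp
    finally show ?thesis using that by simp
  qed
  have "uncurry_arr (sdom V e) ?B (ihom_pre e ?B \<cdot> cg) = uncurry_arr (sdom V e) ?B (ihom_pre e ?B \<cdot> ch)"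
    using transposed[OF cg g] transposed[OF ch h] eq by simp
  then have "ihom_pre e ?B \<cdot> cg = ihom_pre e ?B \<cdot> ch"
    using cg ch by (subst (asm) uncurry_arr_eq_iff) simp_all
  moreover have "is_mono V (ihom_pre e ?B)"
    using V_epi unfolding V_epi_def ..
  ultimately have "cg = ch" by (rule is_monoD[rotated -1]) (use cg ch in simp_all)
  with cg ch have "g \<cdot> lunit V (scod V e) = h \<cdot> lunit V (scod V e)" by simp
  then show "g = h"
    by (rule is_epiD[OF is_epi_if_is_iso[OF is_iso_lunit], rotated -1]) (use g h gh in simp_all)
qed

lemma V_epi_iff_is_epi: "V_epi V e \<longleftrightarrow> is_epi V e"
  using V_epi_if_is_epi is_epi_if_V_epi by blast

lemma orth_if_orth_iso_arrow:
  assumes orth: "orth V e m"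
    and a: "hom_in V a (sdom V e) (sdom V e')" "is_iso V a"
    and b: "hom_in V b (scod V e) (scod V e')" "is_iso V b"
    and square: "b \<cdot> e = e' \<cdot> a"
  shows "orth V e' m"
  unfolding orth_def
proof (intro allI impI, elim conjE)
  fix u v
  assume u: "hom_in V u (sdom V e') (sdom V m)" and v: "hom_in V v (scod V e') (scod V m)"
    and uv: "m \<cdot> u = v \<cdot> e'"
  obtain a' where a': "hom_in V a' (sdom V e') (sdom V e)" "a \<cdot> a' = sid V (sdom V e')"
    using a unfolding is_iso_def by auto
  obtain b' where b': "hom_in V b' (scod V e') (scod V e)" "b' \<cdot> b = sid V (scod V e)"
    "b \<cdot> b' = sid V (scod V e')"
    using b unfolding is_iso_def by auto
  note types = a(1) a'(1) b(1) b'(1) u v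
  have "m \<cdot> (u \<cdot> a) = (v \<cdot> b) \<cdot> e"
    using types comp_reassoc[OF uv] by (simp add: square)
  with orth types have "\<exists>!d. hom_in V d (scod V e) (sdom V m) \<and> d \<cdot> e = u \<cdot> a \<and> m \<cdot> d = v \<cdot> b"
    unfolding orth_def by simp
  then obtain d where d: "hom_in V d (scod V e) (sdom V m)" "d \<cdot> e = u \<cdot> a" "m \<cdot> d = v \<cdot> b"
    and d_unique: "\<And>d'. hom_in V d' (scod V e) (sdom V m) \<Longrightarrow> d' \<cdot> e = u \<cdot> a \<Longrightarrow> m \<cdot> d' = v \<cdot> b \<Longrightarrow> d' = d"
    by blast
  have e': "b \<cdot> e \<cdot> a' = e'"
    using types a'(2) comp_reassoc[OF square] by simp
  show "\<exists>!d'. hom_in V d' (scod V e') (sdom V m) \<and> d' \<cdot> e' = u \<and> m \<cdot> d' = v"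
  proof (intro ex1I conjI)
    show "hom_in V (d \<cdot> b') (scod V e') (sdom V m)" using types d by simp
    have "(d \<cdot> b') \<cdot> e' = (d \<cdot> b') \<cdot> b \<cdot> e \<cdot> a'" by (simp only: e')
    also have "\<dots> = u" using types d a'(2) comp_reassoc[OF b'(2)] comp_reassoc[OF d(2)] by simp
    finally show "(d \<cdot> b') \<cdot> e' = u" .
    show "m \<cdot> d \<cdot> b' = v"
      using types d comp_reassoc[OF d(3)] b'(3) by simp
  next
    fix d'
    assume d': "hom_in V d' (scod V e') (sdom V m) \<and> d' \<cdot> e' = u \<and> m \<cdot> d' = v"
    then have "d' \<cdot> b = d"
      using types square comp_reassoc[of d' e' u] comp_reassoc[of m d' v]
      by (intro d_unique) simp_all
    with d' types b'(3) show "d' = d \<cdot> b'" by auto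
  qed
qed

lemma orth_if_orth_tensor_unit:
  assumes "orth V (sid V (tunit V) \<otimes> e) m"
  shows "orth V e m"
  by (rule orth_if_orth_iso_arrow[OF assms _ is_iso_lunit _ is_iso_lunit lunit_natural]) simp_all

lemma ihom_post_comp_eq_iff:
  assumes "scod V w = ihom V A (sdom V m)" "scod V q = ihom V A (scod V m)" "sdom V w = sdom V q"
  shows "ihom_post A m \<cdot> w = q \<longleftrightarrow>
    m \<cdot> uncurry_arr A (sdom V m) w = uncurry_arr A (scod V m) q"
  using assms uncurry_arr_eq_iff[of "ihom_post A m \<cdot> w" "sdom V q" A "scod V m" q]
  by (simp add: uncurry_arr_ihom_post_comp)

lemma ihom_pre_comp_eq_iff:
  assumes "scod V w = ihom V (scod V e) B" "scod V q = ihom V (sdom V e) B" "sdom V w = sdom V q"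
  shows "ihom_pre e B \<cdot> w = q \<longleftrightarrow>
    uncurry_arr (scod V e) B w \<cdot> (sid V (sdom V w) \<otimes> e) = uncurry_arr (sdom V e) B q"
  using assms uncurry_arr_eq_iff[of "ihom_pre e B \<cdot> w" "sdom V q" "sdom V e" B q]
  by (simp add: uncurry_arr_ihom_pre_comp)

lemma ihom_pre_comp_eq_ihom_post_comp_iff:
  assumes "scod V q1 = ihom V (scod V e) (scod V m)" "scod V q2 = ihom V (sdom V e) (sdom V m)"
    "sdom V q1 = sdom V q2"
  shows "ihom_pre e (scod V m) \<cdot> q1 = ihom_post (sdom V e) m \<cdot> q2 \<longleftrightarrow>
    uncurry_arr (scod V e) (scod V m) q1 \<cdot> (sid V (sdom V q1) \<otimes> e) = m \<cdot> uncurry_arr (sdom V e) (sdom V m) q2"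
  using assms uncurry_arr_eq_iff[of "ihom_pre e (scod V m) \<cdot> q1" "sdom V q1" "sdom V e" "scod V m"
      "ihom_post (sdom V e) m \<cdot> q2"]
  by (simp add: uncurry_arr_ihom_pre_comp uncurry_arr_ihom_post_comp)

lemma ihom_pre_ihom_post_commute:
  "ihom_pre e (scod V m) \<cdot> ihom_post (scod V e) m =
    ihom_post (sdom V e) m \<cdot> ihom_pre e (sdom V m)"
proof -
  let ?w = "sid V (ihom V (scod V e) (sdom V m))"
  have "uncurry_arr (scod V e) (scod V m) (ihom_post (scod V e) m) \<cdot> (sid V (sdom V ?w) \<otimes> e) =
      m \<cdot> uncurry_arr (sdom V e) (sdom V m) (ihom_pre e (sdom V m))"
    using uncurry_arr_ihom_post_comp[of ?w "scod V e" m] uncurry_arr_ihom_pre_comp[of ?w e "sdom V m"]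
    by simp
  then show ?thesis
    using ihom_pre_comp_eq_ihom_post_comp_iff[of "ihom_post (scod V e) m" e m "ihom_pre e (sdom V m)"]
    by simp
qed

lemma ihom_square_cones_iff_orth:
  "(\<forall>q2\<in>hom X (ihom V (sdom V e) (sdom V m)). \<forall>q1\<in>hom X (ihom V (scod V e) (scod V m)).
      ihom_pre e (scod V m) \<cdot> q1 = ihom_post (sdom V e) m \<cdot> q2 \<longrightarrow>
      (\<exists>!w. w \<in> hom X (ihom V (scod V e) (sdom V m)) \<and>
        ihom_post (scod V e) m \<cdot> w = q1 \<and> ihom_pre e (sdom V m) \<cdot> w = q2))
    \<longleftrightarrow> orth V (sid V X \<otimes> e) m"
  (is "?cones \<longleftrightarrow> _")
proof -
  let ?U1 = "uncurry_arr (scod V e) (scod V m)" and ?U2 = "uncurry_arr (sdom V e) (sdom V m)"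
  have commutes: "ihom_pre e (scod V m) \<cdot> q1 = ihom_post (sdom V e) m \<cdot> q2 \<longleftrightarrow>
      m \<cdot> ?U2 q2 = ?U1 q1 \<cdot> (sid V X \<otimes> e)"
    if "q1 \<in> hom X (ihom V (scod V e) (scod V m))" "q2 \<in> hom X (ihom V (sdom V e) (sdom V m))" for q1 q2
    using that by (auto simp add: ihom_pre_comp_eq_ihom_post_comp_iff)
  have factors: "(\<exists>!w. w \<in> hom X (ihom V (scod V e) (sdom V m)) \<and>
        ihom_post (scod V e) m \<cdot> w = q1 \<and> ihom_pre e (sdom V m) \<cdot> w = q2) \<longleftrightarrow>
      (\<exists>!d. d \<in> hom (tobj V X (scod V e)) (sdom V m) \<and> d \<cdot> (sid V X \<otimes> e) = ?U2 q2 \<and> m \<cdot> d = ?U1 q1)"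
    if "q1 \<in> hom X (ihom V (scod V e) (scod V m))" "q2 \<in> hom X (ihom V (sdom V e) (sdom V m))" for q1 q2
    by (rule bij_betw_Ex1_iff[OF bij_betw_uncurry_arr])
      (use that in \<open>auto simp add: ihom_post_comp_eq_iff ihom_pre_comp_eq_iff\<close>)
  have "?cones \<longleftrightarrow>
    (\<forall>u\<in>hom (tobj V X (sdom V e)) (sdom V m). \<forall>v\<in>hom (tobj V X (scod V e)) (scod V m).
      m \<cdot> u = v \<cdot> (sid V X \<otimes> e) \<longrightarrow>
      (\<exists>!d. d \<in> hom (tobj V X (scod V e)) (sdom V m) \<and> d \<cdot> (sid V X \<otimes> e) = u \<and> m \<cdot> d = v))"
    by (rule bij_betw_Ball_iff[OF bij_betw_uncurry_arr], rule bij_betw_Ball_iff[OF bij_betw_uncurry_arr])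
      (simp only: factors commutes)
  also have "\<dots> \<longleftrightarrow> orth V (sid V X \<otimes> e) m"
    unfolding orth_def by (simp add: imp_conjL)
  finally show ?thesis .
qed

lemma V_orth_iff_orth_tensor_id: "V_orth V e m \<longleftrightarrow> (\<forall>X. orth V (sid V X \<otimes> e) m)"
proof -
  let ?post2 = "ihom_post (scod V e) m" and ?pre1 = "ihom_pre e (sdom V m)"
    and ?pre2 = "ihom_pre e (scod V m)" and ?post1 = "ihom_post (sdom V e) m"
  have "V_orth V e m \<longleftrightarrow> (\<forall>q1 q2. sdom V q1 = sdom V q2 \<and> scod V q1 = ihom V (scod V e) (scod V m) \<and>
      scod V q2 = ihom V (sdom V e) (sdom V m) \<and> ?pre2 \<cdot> q1 = ?post1 \<cdot> q2 \<longrightarrow>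
      (\<exists>!w. hom_in V w (sdom V q1) (ihom V (scod V e) (sdom V m)) \<and> ?post2 \<cdot> w = q1 \<and> ?pre1 \<cdot> w = q2))"
    unfolding V_orth_def is_pullback_def by (simp del: hom_in_def add: ihom_pre_ihom_post_commute)
  also have "\<dots> \<longleftrightarrow> (\<forall>X. \<forall>q2\<in>hom X (ihom V (sdom V e) (sdom V m)). \<forall>q1\<in>hom X (ihom V (scod V e) (scod V m)).
      ?pre2 \<cdot> q1 = ?post1 \<cdot> q2 \<longrightarrow>
      (\<exists>!w. w \<in> hom X (ihom V (scod V e) (sdom V m)) \<and> ?post2 \<cdot> w = q1 \<and> ?pre1 \<cdot> w = q2))"
    (is "?universal \<longleftrightarrow> (\<forall>X. ?cones X)")
  proof (intro iffI allI ballI impI; (elim conjE)?)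
    fix X q1 q2
    assume universal: "?universal" and "q1 \<in> hom X (ihom V (scod V e) (scod V m))" "q2 \<in> hom X (ihom V (sdom V e) (sdom V m))"
      and "?pre2 \<cdot> q1 = ?post1 \<cdot> q2"
    then show "\<exists>!w. w \<in> hom X (ihom V (scod V e) (sdom V m)) \<and> ?post2 \<cdot> w = q1 \<and> ?pre1 \<cdot> w = q2"
      using universal[rule_format, of q1 q2] by simp
  next
    fix q1 q2
    assume cones: "\<forall>X. ?cones X" and "sdom V q1 = sdom V q2" "scod V q1 = ihom V (scod V e) (scod V m)"
      "scod V q2 = ihom V (sdom V e) (sdom V m)" "?pre2 \<cdot> q1 = ?post1 \<cdot> q2"
    then show "\<exists>!w. hom_in V w (sdom V q1) (ihom V (scod V e) (sdom V m)) \<and> ?post2 \<cdot> w = q1 \<and> ?pre1 \<cdot> w = q2"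
      using cones[THEN spec, of "sdom V q1", THEN bspec, of q2, THEN bspec, of q1] by simp
  qed
  finally show ?thesis by (simp only: ihom_square_cones_iff_orth)
qed

lemma orth_tensor_epis_iff_orth_epis:
  "(\<forall>e. is_epi V e \<longrightarrow> (\<forall>X. orth V (sid V X \<otimes> e) m)) \<longleftrightarrow> (\<forall>e. is_epi V e \<longrightarrow> orth V e m)"
  using is_epi_tensor_id_left orth_if_orth_tensor_unit by blast

end

theorem proposition7p7:
  fixes V :: "('o, 'm) smc_data"
  assumes "symmetric_monoidal_closed V"
  shows "StrMono_V V = StrMono V"
proof -
  interpret smc V by (rule smc.intro) (fact assms)
  show ?thesis
    unfolding StrMono_V_def StrMono_def
    by (simp add: V_mono_iff_is_mono V_epi_iff_is_epi V_orth_iff_orth_tensor_id orth_tensor_epis_iff_orth_epis)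
qed

end
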